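(* Let $(A,+,\circ)$ be a finite left brace such that $(A,\circ)$ is a Dedekind group (every subgroup is normal), and let $(A,\cdot)$ be its decomposable associated cycle set. Suppose $A$ has a transitive cycle base, let $g$ be an element of a transitive cycle base and let $(A,\bullet)$ be the uniconnected associated cycle set $a\bullet b:=\lambda_a(g)^{-}\circ b$. Then $(A,\bullet)$ and $(A,\cdot)$ have finite multipermutation level and $mpl(A,\cdot)=mpl(A,\bullet)$. Moreover, for every $n\in\mathbb{N}$, the underlying sets of $\mathrm{Ret}^n(A,\cdot)$ and $\mathrm{Ret}^n(A,\bullet)$ coincide (as quotients of $A$).
   Context: A left brace is a set $A$ with two operations such that $(A,+)$ is an abelian group, $(A,\circ)$ is a group, and $a\circ(b+c)=a\circ b-a+a\circ c$. $\lambda_a(b):=-a+a\circ b$; $a\mapsto\lambda_a$ is a homomorphism $(A,\circ)\to\mathrm{Aut}(A,+)$. $a^{-}$ is the inverse in $(A,\circ)$. A transitive cycle base is a single $\lambda$-orbit generating $(A,+)$. A (non-degenerate) cycle set is a set $X$ with an operation such that each $\sigma_x:y\mapsto x\cdot y$ is bijective, $(x\cdot y)\cdot(x\cdot z)=(y\cdot x)\cdot(y\cdot z)$, and $x\mapsto x\cdot x$ is bijective. $\mathrm{Ret}(X)$ is the quotient of $X$ by $x\sim y\iff\sigma_x=\sigma_y$; $\mathrm{Ret}^0(X)=X$, $\mathrm{Ret}^i(X)=\mathrm{Ret}(\mathrm{Ret}^{i-1}(X))$; $mpl(X)$ is the least $n$ with $|\mathrm{Ret}^n(X)|=1$. The decomposable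 associated cycle set is $(A,\cdot)$ with $a\cdot b:=\lambda_a^{-1}(b)$. *)

theory Defs
  imports "HOL-Algebra.Algebra"
begin

definition left_brace :: "'a monoid \<Rightarrow> 'a monoid \<Rightarrow> bool" where
  "left_brace Gadd Gcirc \<longleftrightarrow>
     comm_group Gadd \<and> group Gcirc \<and> carrier Gadd = carrier Gcirc \<and>
     (\<forall>a\<in>carrier Gadd. \<forall>b\<in>carrier Gadd. \<forall>c\<in>carrier Gadd.
        a \<otimes>\<^bsub>Gcirc\<^esub> (b \<otimes>\<^bsub>Gadd\<^esub> c)
        = (a \<otimes>\<^bsub>Gcirc\<^esub> b) \<otimes>\<^bsub>Gadd\<^esub> (inv\<^bsub>Gadd\<^esub> a) \<otimes>\<^bsub>Gadd\<^esub> (a \<otimes>\<^bsub>Gcirc\<^esub> c))"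

definition brace_lambda :: "'a monoid \<Rightarrow> 'a monoid \<Rightarrow> 'a \<Rightarrow> 'a \<Rightarrow> 'a" where
  "brace_lambda Gadd Gcirc a b = (inv\<^bsub>Gadd\<^esub> a) \<otimes>\<^bsub>Gadd\<^esub> (a \<otimes>\<^bsub>Gcirc\<^esub> b)"

definition dedekind_group :: "'a monoid \<Rightarrow> bool" where
  "dedekind_group G \<longleftrightarrow> group G \<and> (\<forall>H. subgroup H G \<longrightarrow> normal H G)"

definition transitive_cycle_base :: "'a monoid \<Rightarrow> 'a monoid \<Rightarrow> 'a set \<Rightarrow> bool" where
  "transitive_cycle_base Gadd Gcirc B \<longleftrightarrow>
     (\<exists>x\<in>carrier Gadd. B = (\<lambda>a. brace_lambda Gadd Gcirc a x) ` carrier Gadd) \<and>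
     generate Gadd B = carrier Gadd"

definition decomp_op :: "'a monoid \<Rightarrow> 'a monoid \<Rightarrow> 'a \<Rightarrow> 'a \<Rightarrow> 'a" where
  "decomp_op Gadd Gcirc a b = the_inv_into (carrier Gadd) (brace_lambda Gadd Gcirc a) b"

definition unicon_op :: "'a monoid \<Rightarrow> 'a monoid \<Rightarrow> 'a \<Rightarrow> 'a \<Rightarrow> 'a \<Rightarrow> 'a" where
  "unicon_op Gadd Gcirc g a b = (inv\<^bsub>Gcirc\<^esub> (brace_lambda Gadd Gcirc a g)) \<otimes>\<^bsub>Gcirc\<^esub> b"

text \<open>The equivalence relation on B whose classes are the elements of Ret^n(B):
  Ret^0(B) = B, and [x]_n, [y]_n are identified in Ret(Ret^n(B)) iff
  sigma_[x]_n = sigma_[y]_n on Ret^n(B), where sigma_[x]([z]) = [x z].\<close>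
primrec ret_rel :: "'a set \<Rightarrow> ('a \<Rightarrow> 'a \<Rightarrow> 'a) \<Rightarrow> nat \<Rightarrow> ('a \<times> 'a) set" where
  "ret_rel B op 0 = Id_on B"
| "ret_rel B op (Suc n) =
     {(x, y). x \<in> B \<and> y \<in> B \<and> (\<forall>z\<in>B. (op x z, op y z) \<in> ret_rel B op n)}"

definition Ret_iter :: "'a set \<Rightarrow> ('a \<Rightarrow> 'a \<Rightarrow> 'a) \<Rightarrow> nat \<Rightarrow> 'a set set" where
  "Ret_iter B op n = B // ret_rel B op n"

definition has_finite_mpl :: "'a set \<Rightarrow> ('a \<Rightarrow> 'a \<Rightarrow> 'a) \<Rightarrow> bool" where
  "has_finite_mpl B op \<longleftrightarrow> (\<exists>n. card (Ret_iter B op n) = 1)"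

definition mpl :: "'a set \<Rightarrow> ('a \<Rightarrow> 'a \<Rightarrow> 'a) \<Rightarrow> nat" where
  "mpl B op = (LEAST n. card (Ret_iter B op n) = 1)"

end

(*
  Let Soc_n be the socle series of the brace, Soc_(n+1)/Soc_n = Soc(A/Soc_n). For both cycle
  sets the n-th retraction relation is congruence modulo Soc_n. For the decomposable one this
  holds in every left brace: sigma_x and sigma_y agree modulo an ideal I iff x^- o y acts
  trivially on A/I. For the uniconnected one, sigma_x is left multiplication by lambda_x(g)^-,
  so x and y are identified modulo I iff lambda_x(g) and lambda_y(g) are congruent modulo I,
  i.e. iff x^- o y stabilises g + I. As (A,o) is Dedekind, this stabiliser is normal, so it
  fixes the class of every element of the orbit of g; that orbit generates A, hence the
  stabiliser is the preimage of Soc(A/I). Finally the socle series of a finite such brace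
  reaches A: if Soc(A/I) = I for a proper ideal I, then x |-> lambda_x(g) would induce a
  bijection of A/I, so some lambda_x(g), hence g and its whole orbit, would lie in I.
*)
theory Submission
  imports Defs
begin

lemma (in normal) rcong_mult_right_iff:
  assumes "p \<in> carrier G" "q \<in> carrier G" "z \<in> carrier G"
  shows "(p \<otimes> z, q \<otimes> z) \<in> rcong\<^bsub>G\<^esub> H \<longleftrightarrow> (p, q) \<in> rcong\<^bsub>G\<^esub> H"
proof -
  have conj: "inv (p \<otimes> z) \<otimes> (q \<otimes> z) = inv z \<otimes> (inv p \<otimes> q) \<otimes> z"
    using assms by (simp add: inv_mult_group m_assoc)
  have "z \<otimes> (inv z \<otimes> (inv p \<otimes> q) \<otimes> z) \<otimes> inv z = inv p \<otimes> q"
    using assms by (simp add: m_assoc) (simp add: m_assoc[symmetric])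
  then have "inv z \<otimes> (inv p \<otimes> q) \<otimes> z \<in> H \<longleftrightarrow> inv p \<otimes> q \<in> H"
    using assms inv_op_closed1[of z "inv p \<otimes> q"] inv_op_closed2[of z "inv z \<otimes> (inv p \<otimes> q) \<otimes> z"]
    by auto
  then show ?thesis
    using assms conj unfolding r_congruent_def by simp
qed

lemma (in normal) mult_mem_commute:
  assumes "a \<in> carrier G" "b \<in> carrier G"
  shows "a \<otimes> b \<in> H \<longleftrightarrow> b \<otimes> a \<in> H"
proof -
  have "y \<otimes> x \<in> H" if "x \<in> carrier G" "y \<in> carrier G" "x \<otimes> y \<in> H" for x y
    using that inv_op_closed1[of x "x \<otimes> y"] by (simp add: m_assoc[symmetric])
  then show ?thesis using assms by blast
qed

lemma finite_equiv_self_embedding_surj: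
  assumes "finite S" and R: "equiv S R" and f: "f ` S \<subseteq> S"
    and reflects: "\<And>x y. x \<in> S \<Longrightarrow> y \<in> S \<Longrightarrow> (f x, f y) \<in> R \<longleftrightarrow> (x, y) \<in> R"
    and "y \<in> S"
  shows "\<exists>x\<in>S. (f x, y) \<in> R"
proof -
  define F where "F Q = R `` (f ` Q)" for Q
  have F_class: "F (R `` {x}) = R `` {f x}" if "x \<in> S" for x
  proof
    show "F (R `` {x}) \<subseteq> R `` {f x}"
      using that f reflects R unfolding F_def equiv_def refl_on_def trans_def by blast
    show "R `` {f x} \<subseteq> F (R `` {x})"
      using that R unfolding F_def equiv_def refl_on_def by blast
  qed
  have "inj_on F (S // R)"
  proof (rule inj_onI)
    fix P Q assume "P \<in> S // R" "Q \<in> S // R" "F P = F Q"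
    then obtain x x' where "x \<in> S" "x' \<in> S" "P = R `` {x}" "Q = R `` {x'}"
      "R `` {f x} = R `` {f x'}"
      by (metis F_class quotientE)
    then show "P = Q" using f reflects eq_equiv_class_iff[OF R] by (metis image_subset_iff)
  qed
  moreover have "F ` (S // R) \<subseteq> S // R"
    using F_class f by (auto elim!: quotientE intro!: quotientI)
  ultimately have "F ` (S // R) = S // R"
    using endo_inj_surj finite_quotient[OF \<open>finite S\<close>] R by (metis equiv_type)
  then have "R `` {y} \<in> F ` (S // R)"
    using \<open>y \<in> S\<close> by (simp add: quotientI)
  then obtain x where "x \<in> S" "R `` {y} = R `` {f x}"
    using F_class by (auto elim!: quotientE)
  then show ?thesis
    using eq_equiv_class_iff[OF R] f \<open>y \<in> S\<close> by (metis image_subset_iff sym_def equiv_def R)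
qed

locale brace =
  fixes A C :: "'a monoid"
  assumes left_brace: "left_brace A C"
begin

sublocale A: comm_group A
  using left_brace unfolding left_brace_def by blast

sublocale C: group C
  using left_brace unfolding left_brace_def by blast

abbreviation add (infixl "+\<^sub>A" 65) where "x +\<^sub>A y \<equiv> x \<otimes>\<^bsub>A\<^esub> y"
abbreviation neg ("-\<^sub>A _" [81] 80) where "-\<^sub>A x \<equiv> inv\<^bsub>A\<^esub> x"
abbreviation zero ("\<zero>\<^sub>A") where "\<zero>\<^sub>A \<equiv> \<one>\<^bsub>A\<^esub>"
abbreviation circ (infixl "\<circ>\<^sub>A" 70) where "x \<circ>\<^sub>A y \<equiv> x \<otimes>\<^bsub>C\<^esub> y"
abbreviation circ_inv ("_\<^sup>-" [1000] 999) where "x\<^sup>- \<equiv> inv\<^bsub>C\<^esub> x"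
abbreviation lambda ("\<lambda>\<^sub>A") where "\<lambda>\<^sub>A \<equiv> brace_lambda A C"

lemma carrier_circ [simp]: "carrier C = carrier A"
  using left_brace unfolding left_brace_def by simp

lemma circ_add_distrib:
  "\<lbrakk>a \<in> carrier A; b \<in> carrier A; c \<in> carrier A\<rbrakk> \<Longrightarrow>
   a \<circ>\<^sub>A (b +\<^sub>A c) = a \<circ>\<^sub>A b +\<^sub>A -\<^sub>A a +\<^sub>A a \<circ>\<^sub>A c"
  using left_brace unfolding left_brace_def by blast

lemma circ_closed [simp]: "a \<in> carrier A \<Longrightarrow> b \<in> carrier A \<Longrightarrow> a \<circ>\<^sub>A b \<in> carrier A"
  using C.m_closed carrier_circ by blast

lemma circ_inv_closed [simp]: "a \<in> carrier A \<Longrightarrow> a\<^sup>- \<in> carrier A"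
  using C.inv_closed carrier_circ by blast

lemma circ_zero_right: "a \<in> carrier A \<Longrightarrow> a \<circ>\<^sub>A \<zero>\<^sub>A = a"
proof -
  assume a: "a \<in> carrier A"
  then have "a \<circ>\<^sub>A \<zero>\<^sub>A = (a \<circ>\<^sub>A \<zero>\<^sub>A +\<^sub>A -\<^sub>A a) +\<^sub>A a \<circ>\<^sub>A \<zero>\<^sub>A"
    using circ_add_distrib[of a "\<zero>\<^sub>A" "\<zero>\<^sub>A"] by simp
  then have diff: "a \<circ>\<^sub>A \<zero>\<^sub>A +\<^sub>A -\<^sub>A a = \<zero>\<^sub>A"
    using a by simp
  have "a \<circ>\<^sub>A \<zero>\<^sub>A = (a \<circ>\<^sub>A \<zero>\<^sub>A +\<^sub>A -\<^sub>A a) +\<^sub>A a"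
    using a by (simp add: A.m_assoc)
  also have "\<dots> = a"
    using a diff by simp
  finally show ?thesis .
qed

lemma circ_one_eq_zero [simp]: "\<one>\<^bsub>C\<^esub> = \<zero>\<^sub>A"
  using circ_zero_right[of "\<one>\<^bsub>C\<^esub>"] C.l_one C.one_closed by simp

lemma lambda_closed [simp]: "a \<in> carrier A \<Longrightarrow> b \<in> carrier A \<Longrightarrow> \<lambda>\<^sub>A a b \<in> carrier A"
  unfolding brace_lambda_def by simp

lemma circ_eq_add_lambda: "a \<in> carrier A \<Longrightarrow> b \<in> carrier A \<Longrightarrow> a \<circ>\<^sub>A b = a +\<^sub>A \<lambda>\<^sub>A a b"
  unfolding brace_lambda_def by (simp add: A.m_assoc[symmetric])

lemma lambda_add:
  "\<lbrakk>a \<in> carrier A; b \<in> carrier A; c \<in> carrier A\<rbrakk> \<Longrightarrow>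
   \<lambda>\<^sub>A a (b +\<^sub>A c) = \<lambda>\<^sub>A a b +\<^sub>A \<lambda>\<^sub>A a c"
  unfolding brace_lambda_def by (simp add: circ_add_distrib A.m_ac)

lemma lambda_circ:
  assumes "a \<in> carrier A" "b \<in> carrier A" "c \<in> carrier A"
  shows "\<lambda>\<^sub>A (a \<circ>\<^sub>A b) c = \<lambda>\<^sub>A a (\<lambda>\<^sub>A b c)"
proof -
  have "a \<circ>\<^sub>A b \<circ>\<^sub>A c = a \<circ>\<^sub>A (b +\<^sub>A \<lambda>\<^sub>A b c)"
    using assms by (simp add: C.m_assoc circ_eq_add_lambda[of b c])
  also have "\<dots> = a \<circ>\<^sub>A b +\<^sub>A (-\<^sub>A a +\<^sub>A a \<circ>\<^sub>A \<lambda>\<^sub>A b c)"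
    using assms by (simp add: circ_add_distrib A.m_assoc)
  finally show ?thesis
    using assms unfolding brace_lambda_def by (simp add: A.m_assoc[symmetric])
qed

lemma lambda_zero_left [simp]: "c \<in> carrier A \<Longrightarrow> \<lambda>\<^sub>A \<zero>\<^sub>A c = c"
  unfolding brace_lambda_def using C.l_one[of c] by simp

lemma lambda_zero_right [simp]: "a \<in> carrier A \<Longrightarrow> \<lambda>\<^sub>A a \<zero>\<^sub>A = \<zero>\<^sub>A"
  unfolding brace_lambda_def by (simp add: circ_zero_right)

lemma lambda_neg: "a \<in> carrier A \<Longrightarrow> b \<in> carrier A \<Longrightarrow> \<lambda>\<^sub>A a (-\<^sub>A b) = -\<^sub>A \<lambda>\<^sub>A a b"
  using lambda_add[of a "-\<^sub>A b" b] A.inv_equality[of "\<lambda>\<^sub>A a (-\<^sub>A b)" "\<lambda>\<^sub>A a b"] by simp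

lemma lambda_inv_lambda [simp]: "a \<in> carrier A \<Longrightarrow> b \<in> carrier A \<Longrightarrow> \<lambda>\<^sub>A (a\<^sup>-) (\<lambda>\<^sub>A a b) = b"
  using lambda_circ[of "a\<^sup>-" a b] C.l_inv by simp

lemma lambda_lambda_inv [simp]: "a \<in> carrier A \<Longrightarrow> b \<in> carrier A \<Longrightarrow> \<lambda>\<^sub>A a (\<lambda>\<^sub>A (a\<^sup>-) b) = b"
  using lambda_circ[of a "a\<^sup>-" b] C.r_inv by simp

lemma lambda_circ_inv_circ: "a \<in> carrier A \<Longrightarrow> b \<in> carrier A \<Longrightarrow> \<lambda>\<^sub>A a (a\<^sup>- \<circ>\<^sub>A b) = -\<^sub>A a +\<^sub>A b"
  unfolding brace_lambda_def by (simp add: C.m_assoc[symmetric])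

lemma neg_lambda_circ_inv: "a \<in> carrier A \<Longrightarrow> -\<^sub>A a = \<lambda>\<^sub>A a (a\<^sup>-)"
  using lambda_circ_inv_circ[of a "\<zero>\<^sub>A"] by (simp add: circ_zero_right)

lemma decomp_op_eq: "a \<in> carrier A \<Longrightarrow> b \<in> carrier A \<Longrightarrow> decomp_op A C a b = \<lambda>\<^sub>A (a\<^sup>-) b"
proof -
  assume a: "a \<in> carrier A" and b: "b \<in> carrier A"
  have "inj_on (\<lambda>\<^sub>A a) (carrier A)"
    by (rule inj_on_inverseI[where g = "\<lambda>\<^sub>A (a\<^sup>-)"]) (simp add: a)
  with a b show ?thesis
    unfolding decomp_op_def using the_inv_into_f_f[of "\<lambda>\<^sub>A a" "carrier A" "\<lambda>\<^sub>A (a\<^sup>-) b"] by simp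
qed

lemma neg_diff: "a \<in> carrier A \<Longrightarrow> b \<in> carrier A \<Longrightarrow> -\<^sub>A (-\<^sub>A a +\<^sub>A b) = -\<^sub>A b +\<^sub>A a"
  by (simp add: A.inv_mult A.m_comm)

lemma add_neg_cancel_left [simp]: "x \<in> carrier A \<Longrightarrow> z \<in> carrier A \<Longrightarrow> x +\<^sub>A (-\<^sub>A x +\<^sub>A z) = z"
  by (simp add: A.m_assoc[symmetric])

lemma neg_add_cancel_left [simp]: "x \<in> carrier A \<Longrightarrow> z \<in> carrier A \<Longrightarrow> -\<^sub>A x +\<^sub>A (x +\<^sub>A z) = z"
  by (simp add: A.m_assoc[symmetric])

lemma neg_add_chain:
  assumes "u \<in> carrier A" "v \<in> carrier A" "w \<in> carrier A"
  shows "(-\<^sub>A v +\<^sub>A w) +\<^sub>A (-\<^sub>A u +\<^sub>A v) = -\<^sub>A u +\<^sub>A w"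
proof -
  have "(-\<^sub>A v +\<^sub>A w) +\<^sub>A (-\<^sub>A u +\<^sub>A v) = -\<^sub>A u +\<^sub>A (v +\<^sub>A (-\<^sub>A v +\<^sub>A w))"
    using assms by (simp add: A.m_ac)
  then show ?thesis using assms by simp
qed

definition brace_ideal :: "'a set \<Rightarrow> bool" where
  "brace_ideal I \<longleftrightarrow> subgroup I A \<and> I \<lhd> C \<and> (\<forall>a\<in>carrier A. \<forall>x\<in>I. \<lambda>\<^sub>A a x \<in> I)"

lemma brace_ideal_subgroup_add: "brace_ideal I \<Longrightarrow> subgroup I A"
  unfolding brace_ideal_def by blast

lemma brace_ideal_normal_circ: "brace_ideal I \<Longrightarrow> I \<lhd> C"
  unfolding brace_ideal_def by blast

lemma brace_ideal_lambda_closed: "brace_ideal I \<Longrightarrow> a \<in> carrier A \<Longrightarrow> x \<in> I \<Longrightarrow> \<lambda>\<^sub>A a x \<in> I"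
  unfolding brace_ideal_def by blast

lemma brace_ideal_subset: "brace_ideal I \<Longrightarrow> I \<subseteq> carrier A"
  using brace_ideal_subgroup_add subgroup.subset by blast

lemma brace_ideal_lambda_iff:
  "brace_ideal I \<Longrightarrow> a \<in> carrier A \<Longrightarrow> x \<in> carrier A \<Longrightarrow> \<lambda>\<^sub>A a x \<in> I \<longleftrightarrow> x \<in> I"
  using brace_ideal_lambda_closed[of I "a\<^sup>-" "\<lambda>\<^sub>A a x"] brace_ideal_lambda_closed[of I a x] by auto

lemma brace_ideal_zero: "brace_ideal {\<zero>\<^sub>A}"
  unfolding brace_ideal_def using A.triv_subgroup C.one_is_normal by simp

lemma brace_ideal_neg_add_iff:
  "brace_ideal I \<Longrightarrow> a \<in> carrier A \<Longrightarrow> b \<in> carrier A \<Longrightarrow> -\<^sub>A a +\<^sub>A b \<in> I \<longleftrightarrow> a\<^sup>- \<circ>\<^sub>A b \<in> I"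
  using brace_ideal_lambda_iff[of I a "a\<^sup>- \<circ>\<^sub>A b"] by (simp add: lambda_circ_inv_circ)

lemma rcong_add_eq_rcong_circ: "brace_ideal I \<Longrightarrow> rcong\<^bsub>A\<^esub> I = rcong\<^bsub>C\<^esub> I"
  unfolding r_congruent_def using brace_ideal_neg_add_iff by auto

text \<open>The preimage in \<open>A\<close> of the socle of \<open>A/I\<close>.\<close>
definition socle_over :: "'a set \<Rightarrow> 'a set" where
  "socle_over I = {c \<in> carrier A. \<forall>u\<in>carrier A. -\<^sub>A u +\<^sub>A \<lambda>\<^sub>A c u \<in> I}"

lemma socle_over_subset: "socle_over I \<subseteq> carrier A"
  unfolding socle_over_def by blast

lemma subset_socle_over:
  assumes I: "brace_ideal I"
  shows "I \<subseteq> socle_over I"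
proof
  fix c assume c: "c \<in> I"
  interpret I: normal I C using brace_ideal_normal_circ[OF I] .
  have cA: "c \<in> carrier A" using c brace_ideal_subset[OF I] by blast
  have "-\<^sub>A u +\<^sub>A \<lambda>\<^sub>A c u \<in> I" if u: "u \<in> carrier A" for u
  proof -
    define j where "j = u\<^sup>- \<circ>\<^sub>A c \<circ>\<^sub>A u"
    have j: "j \<in> I" unfolding j_def using I.inv_op_closed1 u c by simp
    have jA: "j \<in> carrier A" using j brace_ideal_subset[OF I] by blast
    have "c \<circ>\<^sub>A u = u \<circ>\<^sub>A j"
      unfolding j_def using u cA by (simp add: C.m_assoc[symmetric])
    then have "\<lambda>\<^sub>A c u = -\<^sub>A c +\<^sub>A (u +\<^sub>A \<lambda>\<^sub>A u j)"
      unfolding brace_lambda_def using u jA by (simp add: circ_eq_add_lambda[of u j, symmetric])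
    then have "-\<^sub>A u +\<^sub>A \<lambda>\<^sub>A c u = -\<^sub>A c +\<^sub>A \<lambda>\<^sub>A u j"
      using u cA jA by (simp add: A.m_lcomm[of "-\<^sub>A u" "-\<^sub>A c"])
    then show ?thesis
      using j c u brace_ideal_lambda_closed[OF I] subgroup.m_closed[OF brace_ideal_subgroup_add[OF I]]
        subgroup.m_inv_closed[OF brace_ideal_subgroup_add[OF I]] by simp
  qed
  then show "c \<in> socle_over I" unfolding socle_over_def using cA by blast
qed

lemma subgroup_circ_socle_over:
  assumes I: "brace_ideal I"
  shows "subgroup (socle_over I) C"
proof (rule C.subgroupI)
  interpret I: subgroup I A using brace_ideal_subgroup_add[OF I] .
  show "socle_over I \<subseteq> carrier C" using socle_over_subset by simp
  show "socle_over I \<noteq> {}" using subset_socle_over[OF I] I.one_closed by blast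
next
  interpret I: subgroup I A using brace_ideal_subgroup_add[OF I] .
  fix c assume "c \<in> socle_over I"
  then have c: "c \<in> carrier A" and hc: "\<And>u. u \<in> carrier A \<Longrightarrow> -\<^sub>A u +\<^sub>A \<lambda>\<^sub>A c u \<in> I"
    unfolding socle_over_def by auto
  have "-\<^sub>A u +\<^sub>A \<lambda>\<^sub>A (c\<^sup>-) u \<in> I" if u: "u \<in> carrier A" for u
  proof -
    define v where "v = \<lambda>\<^sub>A (c\<^sup>-) u"
    have v: "v \<in> carrier A" and u_eq: "u = \<lambda>\<^sub>A c v" unfolding v_def using u c by simp_all
    have "-\<^sub>A u +\<^sub>A v = -\<^sub>A (-\<^sub>A v +\<^sub>A \<lambda>\<^sub>A c v)" unfolding u_eq using c v by (simp add: neg_diff)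
    then show ?thesis using hc[OF v] unfolding v_def by simp
  qed
  then show "c\<^sup>- \<in> socle_over I" unfolding socle_over_def using c by simp
next
  interpret I: subgroup I A using brace_ideal_subgroup_add[OF I] .
  fix c d assume "c \<in> socle_over I" "d \<in> socle_over I"
  then have c: "c \<in> carrier A" and hc: "\<And>u. u \<in> carrier A \<Longrightarrow> -\<^sub>A u +\<^sub>A \<lambda>\<^sub>A c u \<in> I"
    and d: "d \<in> carrier A" and hd: "\<And>u. u \<in> carrier A \<Longrightarrow> -\<^sub>A u +\<^sub>A \<lambda>\<^sub>A d u \<in> I"
    unfolding socle_over_def by auto
  have "-\<^sub>A u +\<^sub>A \<lambda>\<^sub>A (c \<circ>\<^sub>A d) u \<in> I" if u: "u \<in> carrier A" for u
  proof -
    define v where "v = \<lambda>\<^sub>A d u"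
    have v: "v \<in> carrier A" unfolding v_def using u d by simp
    have "-\<^sub>A u +\<^sub>A \<lambda>\<^sub>A (c \<circ>\<^sub>A d) u = (-\<^sub>A v +\<^sub>A \<lambda>\<^sub>A c v) +\<^sub>A (-\<^sub>A u +\<^sub>A v)"
      unfolding v_def using u c d by (simp add: lambda_circ neg_add_chain)
    then show ?thesis
      using I.m_closed[OF hc[OF v] hd[OF u]] unfolding v_def by simp
  qed
  then show "c \<circ>\<^sub>A d \<in> socle_over I" unfolding socle_over_def using c d by simp
qed

lemma normal_circ_socle_over:
  assumes I: "brace_ideal I"
  shows "socle_over I \<lhd> C"
  unfolding C.normal_inv_iff
proof (intro conjI ballI)
  show "subgroup (socle_over I) C" using subgroup_circ_socle_over[OF I] .
  fix a c assume "a \<in> carrier C" "c \<in> socle_over I"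
  then have a: "a \<in> carrier A" and c: "c \<in> carrier A"
    and hc: "\<And>u. u \<in> carrier A \<Longrightarrow> -\<^sub>A u +\<^sub>A \<lambda>\<^sub>A c u \<in> I"
    unfolding socle_over_def by auto
  have "-\<^sub>A u +\<^sub>A \<lambda>\<^sub>A (a \<circ>\<^sub>A c \<circ>\<^sub>A a\<^sup>-) u \<in> I" if u: "u \<in> carrier A" for u
  proof -
    define v where "v = \<lambda>\<^sub>A (a\<^sup>-) u"
    have v: "v \<in> carrier A" and u_eq: "u = \<lambda>\<^sub>A a v" unfolding v_def using u a by simp_all
    have "-\<^sub>A u +\<^sub>A \<lambda>\<^sub>A (a \<circ>\<^sub>A c \<circ>\<^sub>A a\<^sup>-) u = \<lambda>\<^sub>A a (-\<^sub>A v +\<^sub>A \<lambda>\<^sub>A c v)"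
      unfolding u_eq using a c v by (simp add: lambda_circ lambda_add lambda_neg)
    then show ?thesis using brace_ideal_lambda_closed[OF I a hc[OF v]] by simp
  qed
  then show "a \<circ>\<^sub>A c \<circ>\<^sub>A a\<^sup>- \<in> socle_over I" unfolding socle_over_def using a c by simp
qed

lemma socle_over_add_ideal:
  assumes I: "brace_ideal I" and k: "k \<in> socle_over I" and i: "i \<in> I"
  shows "k +\<^sub>A i \<in> socle_over I"
proof -
  interpret S: subgroup "socle_over I" C using subgroup_circ_socle_over[OF I] .
  have kA: "k \<in> carrier A" using k socle_over_subset by blast
  have iA: "i \<in> carrier A" using i brace_ideal_subset[OF I] by blast
  have "k +\<^sub>A i = k \<circ>\<^sub>A \<lambda>\<^sub>A (k\<^sup>-) i"
    using kA iA by (simp add: circ_eq_add_lambda)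
  moreover have "\<lambda>\<^sub>A (k\<^sup>-) i \<in> socle_over I"
    using subset_socle_over[OF I] brace_ideal_lambda_closed[OF I _ i] kA by auto
  ultimately show ?thesis using k by simp
qed

lemma lambda_socle_over:
  assumes I: "brace_ideal I" and a: "a \<in> carrier A" and c: "c \<in> socle_over I"
  shows "\<lambda>\<^sub>A a c \<in> socle_over I"
proof -
  interpret S: normal "socle_over I" C using normal_circ_socle_over[OF I] .
  have cA: "c \<in> carrier A" using c socle_over_subset by blast
  define k where "k = a \<circ>\<^sub>A c \<circ>\<^sub>A a\<^sup>-"
  have k: "k \<in> socle_over I" unfolding k_def using S.inv_op_closed2 a c by simp
  have kA: "k \<in> carrier A" using k socle_over_subset by blast
  have "a \<circ>\<^sub>A c = k \<circ>\<^sub>A a"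
    unfolding k_def using a cA by (simp add: C.m_assoc)
  then have "\<lambda>\<^sub>A a c = k +\<^sub>A (-\<^sub>A a +\<^sub>A \<lambda>\<^sub>A k a)"
    unfolding brace_lambda_def using a kA
    by (simp add: circ_eq_add_lambda[of k a] A.m_lcomm[of "-\<^sub>A a" k])
  moreover have "-\<^sub>A a +\<^sub>A \<lambda>\<^sub>A k a \<in> I" using k a unfolding socle_over_def by blast
  ultimately show ?thesis using socle_over_add_ideal[OF I k] by simp
qed

lemma brace_ideal_socle_over:
  assumes I: "brace_ideal I"
  shows "brace_ideal (socle_over I)"
proof -
  interpret S: subgroup "socle_over I" C using subgroup_circ_socle_over[OF I] .
  have "subgroup (socle_over I) A"
  proof (rule A.subgroupI)
    show "socle_over I \<subseteq> carrier A" using socle_over_subset .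
    show "socle_over I \<noteq> {}" using S.one_closed by blast
  next
    fix c assume c: "c \<in> socle_over I"
    then have "c \<in> carrier A" using socle_over_subset by blast
    then show "-\<^sub>A c \<in> socle_over I"
      using lambda_socle_over[OF I _ S.m_inv_closed[OF c]] by (simp add: neg_lambda_circ_inv)
  next
    fix c d assume c: "c \<in> socle_over I" and d: "d \<in> socle_over I"
    have "c \<in> carrier A" "d \<in> carrier A" using c d socle_over_subset by blast+
    then have "c +\<^sub>A d = c \<circ>\<^sub>A \<lambda>\<^sub>A (c\<^sup>-) d" by (simp add: circ_eq_add_lambda)
    then show "c +\<^sub>A d \<in> socle_over I"
      using S.m_closed[OF c lambda_socle_over[OF I _ d]] \<open>c \<in> carrier A\<close> by simp
  qed
  then show ?thesis
    unfolding brace_ideal_def using normal_circ_socle_over[OF I] lambda_socle_over[OF I] by blast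
qed

lemma circ_inv_circ_socle_over_iff:
  assumes I: "brace_ideal I" and x: "x \<in> carrier A" and y: "y \<in> carrier A"
  shows "x\<^sup>- \<circ>\<^sub>A y \<in> socle_over I \<longleftrightarrow> (\<forall>z\<in>carrier A. -\<^sub>A \<lambda>\<^sub>A (x\<^sup>-) z +\<^sub>A \<lambda>\<^sub>A (y\<^sup>-) z \<in> I)"
proof
  interpret I: subgroup I A using brace_ideal_subgroup_add[OF I] .
  assume S: "x\<^sup>- \<circ>\<^sub>A y \<in> socle_over I"
  show "\<forall>z\<in>carrier A. -\<^sub>A \<lambda>\<^sub>A (x\<^sup>-) z +\<^sub>A \<lambda>\<^sub>A (y\<^sup>-) z \<in> I"
  proof
    fix z assume z: "z \<in> carrier A"
    have "-\<^sub>A \<lambda>\<^sub>A (y\<^sup>-) z +\<^sub>A \<lambda>\<^sub>A (x\<^sup>- \<circ>\<^sub>A y) (\<lambda>\<^sub>A (y\<^sup>-) z) \<in> I"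
      using S y z unfolding socle_over_def by simp
    then have "-\<^sub>A (-\<^sub>A \<lambda>\<^sub>A (y\<^sup>-) z +\<^sub>A \<lambda>\<^sub>A (x\<^sup>-) z) \<in> I"
      using x y z by (simp add: lambda_circ)
    then show "-\<^sub>A \<lambda>\<^sub>A (x\<^sup>-) z +\<^sub>A \<lambda>\<^sub>A (y\<^sup>-) z \<in> I"
      using x y z by (simp add: neg_diff)
  qed
next
  interpret I: subgroup I A using brace_ideal_subgroup_add[OF I] .
  assume H: "\<forall>z\<in>carrier A. -\<^sub>A \<lambda>\<^sub>A (x\<^sup>-) z +\<^sub>A \<lambda>\<^sub>A (y\<^sup>-) z \<in> I"
  have "-\<^sub>A u +\<^sub>A \<lambda>\<^sub>A (x\<^sup>- \<circ>\<^sub>A y) u \<in> I" if u: "u \<in> carrier A" for u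
  proof -
    have "-\<^sub>A \<lambda>\<^sub>A (x\<^sup>- \<circ>\<^sub>A y) u +\<^sub>A u \<in> I"
      using H[rule_format, of "\<lambda>\<^sub>A y u"] x y u by (simp add: lambda_circ)
    then have "-\<^sub>A (-\<^sub>A \<lambda>\<^sub>A (x\<^sup>- \<circ>\<^sub>A y) u +\<^sub>A u) \<in> I" by simp
    then show ?thesis using x y u by (simp add: neg_diff)
  qed
  then show "x\<^sup>- \<circ>\<^sub>A y \<in> socle_over I" unfolding socle_over_def using x y by simp
qed

lemma ret_rel_decomp_op_Suc:
  assumes I: "brace_ideal I" and n: "ret_rel (carrier A) (decomp_op A C) n = rcong\<^bsub>A\<^esub> I"
  shows "ret_rel (carrier A) (decomp_op A C) (Suc n) = rcong\<^bsub>A\<^esub> (socle_over I)"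
proof -
  have "(x, y) \<in> ret_rel (carrier A) (decomp_op A C) (Suc n) \<longleftrightarrow>
        x \<in> carrier A \<and> y \<in> carrier A \<and> x\<^sup>- \<circ>\<^sub>A y \<in> socle_over I" for x y
    using circ_inv_circ_socle_over_iff[OF I, of x y]
    by (auto simp: n r_congruent_def decomp_op_eq)
  then show ?thesis
    unfolding rcong_add_eq_rcong_circ[OF brace_ideal_socle_over[OF I]]
    by (auto simp: r_congruent_def)
qed

definition socle_series :: "nat \<Rightarrow> 'a set" where
  "socle_series n = (socle_over ^^ n) {\<zero>\<^sub>A}"

lemma socle_series_0 [simp]: "socle_series 0 = {\<zero>\<^sub>A}"
  unfolding socle_series_def by simp

lemma socle_series_Suc [simp]: "socle_series (Suc n) = socle_over (socle_series n)"
  unfolding socle_series_def by simp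

lemma brace_ideal_socle_series: "brace_ideal (socle_series n)"
  by (induction n) (simp_all add: brace_ideal_zero brace_ideal_socle_over)

lemma rcong_zero: "rcong\<^bsub>A\<^esub> {\<zero>\<^sub>A} = Id_on (carrier A)"
proof -
  have "-\<^sub>A a +\<^sub>A b = \<zero>\<^sub>A \<longleftrightarrow> a = b" if "a \<in> carrier A" "b \<in> carrier A" for a b
    using add_neg_cancel_left[of a b] that by (metis A.r_one A.l_inv)
  then show ?thesis unfolding r_congruent_def Id_on_def by auto
qed

lemma ret_rel_decomp_op: "ret_rel (carrier A) (decomp_op A C) n = rcong\<^bsub>A\<^esub> (socle_series n)"
proof (induction n)
  case 0
  show ?case by (simp add: rcong_zero)
next
  case (Suc n)
  show ?case
    using ret_rel_decomp_op_Suc[OF brace_ideal_socle_series Suc.IH] by (simp del: ret_rel.simps)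
qed

lemma socle_over_carrier: "socle_over (carrier A) = carrier A"
  unfolding socle_over_def by auto

lemma card_quotient_rcong_carrier: "card (carrier A // rcong\<^bsub>A\<^esub> (carrier A)) = 1"
proof -
  have "rcong\<^bsub>A\<^esub> (carrier A) = carrier A \<times> carrier A"
    unfolding r_congruent_def by auto
  then have "carrier A // rcong\<^bsub>A\<^esub> (carrier A) = {carrier A}"
    unfolding quotient_def by auto
  then show ?thesis by simp
qed

lemma transitive_cycle_base_orbit_generates:
  assumes T: "transitive_cycle_base A C B" and g: "g \<in> B"
  shows "g \<in> carrier A" and "generate A ((\<lambda>a. \<lambda>\<^sub>A a g) ` carrier A) = carrier A"
proof -
  obtain x where x: "x \<in> carrier A" and B: "B = (\<lambda>a. \<lambda>\<^sub>A a x) ` carrier A"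
    and gen: "generate A B = carrier A"
    using T unfolding transitive_cycle_base_def by blast
  obtain b where b: "b \<in> carrier A" and gb: "g = \<lambda>\<^sub>A b x" using g B by blast
  show gA: "g \<in> carrier A" using gb b x by simp
  have "B \<subseteq> (\<lambda>a. \<lambda>\<^sub>A a g) ` carrier A"
  proof
    fix y assume "y \<in> B"
    then obtain a where a: "a \<in> carrier A" and y: "y = \<lambda>\<^sub>A a x" using B by blast
    have "\<lambda>\<^sub>A (a \<circ>\<^sub>A b\<^sup>-) g = y"
      unfolding gb y using a b x by (simp add: lambda_circ)
    then show "y \<in> (\<lambda>a. \<lambda>\<^sub>A a g) ` carrier A" using a b by (metis circ_closed circ_inv_closed image_eqI)
  qed
  then have "carrier A \<subseteq> generate A ((\<lambda>a. \<lambda>\<^sub>A a g) ` carrier A)"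
    using A.mono_generate gen by blast
  moreover have "(\<lambda>a. \<lambda>\<^sub>A a g) ` carrier A \<subseteq> carrier A" using gA by auto
  ultimately show "generate A ((\<lambda>a. \<lambda>\<^sub>A a g) ` carrier A) = carrier A"
    using A.generate_incl by blast
qed

lemma lambda_defect_subgroup:
  assumes I: "brace_ideal I" and c: "c \<in> carrier A"
  shows "subgroup {u \<in> carrier A. -\<^sub>A u +\<^sub>A \<lambda>\<^sub>A c u \<in> I} A"
proof (rule A.subgroupI)
  interpret I: subgroup I A using brace_ideal_subgroup_add[OF I] .
  show "{u \<in> carrier A. -\<^sub>A u +\<^sub>A \<lambda>\<^sub>A c u \<in> I} \<subseteq> carrier A" by blast
  show "{u \<in> carrier A. -\<^sub>A u +\<^sub>A \<lambda>\<^sub>A c u \<in> I} \<noteq> {}" using c by auto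
next
  interpret I: subgroup I A using brace_ideal_subgroup_add[OF I] .
  fix u assume "u \<in> {u \<in> carrier A. -\<^sub>A u +\<^sub>A \<lambda>\<^sub>A c u \<in> I}"
  then have u: "u \<in> carrier A" and h: "-\<^sub>A u +\<^sub>A \<lambda>\<^sub>A c u \<in> I" by auto
  have "-\<^sub>A (-\<^sub>A u) +\<^sub>A \<lambda>\<^sub>A c (-\<^sub>A u) = -\<^sub>A (-\<^sub>A u +\<^sub>A \<lambda>\<^sub>A c u)"
    using u c by (simp add: lambda_neg neg_diff A.m_comm)
  then show "-\<^sub>A u \<in> {u \<in> carrier A. -\<^sub>A u +\<^sub>A \<lambda>\<^sub>A c u \<in> I}" using u h by simp
next
  interpret I: subgroup I A using brace_ideal_subgroup_add[OF I] .
  fix u v assume "u \<in> {u \<in> carrier A. -\<^sub>A u +\<^sub>A \<lambda>\<^sub>A c u \<in> I}" "v \<in> {u \<in> carrier A. -\<^sub>A u +\<^sub>A \<lambda>\<^sub>A c u \<in> I}"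
  then have u: "u \<in> carrier A" and hu: "-\<^sub>A u +\<^sub>A \<lambda>\<^sub>A c u \<in> I"
    and v: "v \<in> carrier A" and hv: "-\<^sub>A v +\<^sub>A \<lambda>\<^sub>A c v \<in> I" by auto
  have "-\<^sub>A (u +\<^sub>A v) +\<^sub>A \<lambda>\<^sub>A c (u +\<^sub>A v) = (-\<^sub>A u +\<^sub>A \<lambda>\<^sub>A c u) +\<^sub>A (-\<^sub>A v +\<^sub>A \<lambda>\<^sub>A c v)"
    using u v c by (simp add: lambda_add A.inv_mult A.m_ac)
  then show "u +\<^sub>A v \<in> {u \<in> carrier A. -\<^sub>A u +\<^sub>A \<lambda>\<^sub>A c u \<in> I}" using u v I.m_closed[OF hu hv] by simp
qed

end

locale brace_orbit = brace +
  fixes g :: 'a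
  assumes g_closed: "g \<in> carrier A"
    and orbit_generates: "generate A ((\<lambda>a. \<lambda>\<^sub>A a g) ` carrier A) = carrier A"
begin

lemma carrier_subset_subgroup_of_orbit:
  "subgroup U A \<Longrightarrow> (\<And>a. a \<in> carrier A \<Longrightarrow> \<lambda>\<^sub>A a g \<in> U) \<Longrightarrow> carrier A \<subseteq> U"
  using A.generate_subgroup_incl[of "(\<lambda>a. \<lambda>\<^sub>A a g) ` carrier A" U] orbit_generates by blast

definition stabiliser_mod :: "'a set \<Rightarrow> 'a set" where
  "stabiliser_mod I = {c \<in> carrier A. -\<^sub>A g +\<^sub>A \<lambda>\<^sub>A c g \<in> I}"

lemma subgroup_circ_stabiliser_mod:
  assumes I: "brace_ideal I"
  shows "subgroup (stabiliser_mod I) C"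
proof (rule C.subgroupI)
  interpret I: subgroup I A using brace_ideal_subgroup_add[OF I] .
  show "stabiliser_mod I \<subseteq> carrier C" unfolding stabiliser_mod_def by auto
  have "\<zero>\<^sub>A \<in> stabiliser_mod I" unfolding stabiliser_mod_def using g_closed by simp
  then show "stabiliser_mod I \<noteq> {}" by blast
next
  interpret I: subgroup I A using brace_ideal_subgroup_add[OF I] .
  fix c assume "c \<in> stabiliser_mod I"
  then have c: "c \<in> carrier A" and h: "-\<^sub>A g +\<^sub>A \<lambda>\<^sub>A c g \<in> I" unfolding stabiliser_mod_def by auto
  have "-\<^sub>A g +\<^sub>A \<lambda>\<^sub>A (c\<^sup>-) g = \<lambda>\<^sub>A (c\<^sup>-) (-\<^sub>A (-\<^sub>A g +\<^sub>A \<lambda>\<^sub>A c g))"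
    using c g_closed by (simp add: neg_diff lambda_add lambda_neg)
  then show "c\<^sup>- \<in> stabiliser_mod I"
    unfolding stabiliser_mod_def using c brace_ideal_lambda_closed[OF I _ I.m_inv_closed[OF h]] by simp
next
  interpret I: subgroup I A using brace_ideal_subgroup_add[OF I] .
  fix c d assume "c \<in> stabiliser_mod I" "d \<in> stabiliser_mod I"
  then have c: "c \<in> carrier A" and hc: "-\<^sub>A g +\<^sub>A \<lambda>\<^sub>A c g \<in> I"
    and d: "d \<in> carrier A" and hd: "-\<^sub>A g +\<^sub>A \<lambda>\<^sub>A d g \<in> I"
    unfolding stabiliser_mod_def by auto
  have "-\<^sub>A g +\<^sub>A \<lambda>\<^sub>A (c \<circ>\<^sub>A d) g = \<lambda>\<^sub>A c (-\<^sub>A g +\<^sub>A \<lambda>\<^sub>A d g) +\<^sub>A (-\<^sub>A g +\<^sub>A \<lambda>\<^sub>A c g)"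
    using c d g_closed by (simp add: lambda_add lambda_neg lambda_circ neg_add_chain)
  then show "c \<circ>\<^sub>A d \<in> stabiliser_mod I"
    unfolding stabiliser_mod_def
    using c d I.m_closed[OF brace_ideal_lambda_closed[OF I c hd] hc] by simp
qed

end

locale dedekind_brace_orbit = brace_orbit +
  assumes dedekind: "dedekind_group C"
begin

text \<open>The only use of the Dedekind hypothesis.\<close>
lemma socle_over_eq_stabiliser_mod:
  assumes I: "brace_ideal I"
  shows "socle_over I = stabiliser_mod I"
proof
  show "socle_over I \<subseteq> stabiliser_mod I"
    unfolding socle_over_def stabiliser_mod_def using g_closed by blast
next
  show "stabiliser_mod I \<subseteq> socle_over I"
  proof
    fix c assume c_stab: "c \<in> stabiliser_mod I"
    then have c: "c \<in> carrier A" unfolding stabiliser_mod_def by blast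
    interpret St: normal "stabiliser_mod I" C
      using dedekind subgroup_circ_stabiliser_mod[OF I] unfolding dedekind_group_def by blast
    have "\<lambda>\<^sub>A a g \<in> {u \<in> carrier A. -\<^sub>A u +\<^sub>A \<lambda>\<^sub>A c u \<in> I}" if a: "a \<in> carrier A" for a
    proof -
      define c' where "c' = a\<^sup>- \<circ>\<^sub>A c \<circ>\<^sub>A a"
      have "c' \<in> stabiliser_mod I" unfolding c'_def using St.inv_op_closed1 a c_stab by simp
      then have c': "c' \<in> carrier A" and h: "-\<^sub>A g +\<^sub>A \<lambda>\<^sub>A c' g \<in> I"
        unfolding stabiliser_mod_def by auto
      have "c \<circ>\<^sub>A a = a \<circ>\<^sub>A c'" unfolding c'_def using a c by (simp add: C.m_assoc[symmetric])
      then have "\<lambda>\<^sub>A c (\<lambda>\<^sub>A a g) = \<lambda>\<^sub>A a (\<lambda>\<^sub>A c' g)"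
        using a c c' g_closed by (metis lambda_circ)
      then have "-\<^sub>A \<lambda>\<^sub>A a g +\<^sub>A \<lambda>\<^sub>A c (\<lambda>\<^sub>A a g) = \<lambda>\<^sub>A a (-\<^sub>A g +\<^sub>A \<lambda>\<^sub>A c' g)"
        using a c' g_closed by (simp add: lambda_add lambda_neg)
      then show ?thesis using brace_ideal_lambda_closed[OF I a h] a g_closed by simp
    qed
    then have "carrier A \<subseteq> {u \<in> carrier A. -\<^sub>A u +\<^sub>A \<lambda>\<^sub>A c u \<in> I}"
      using carrier_subset_subgroup_of_orbit[OF lambda_defect_subgroup[OF I c]] by blast
    then show "c \<in> socle_over I" unfolding socle_over_def using c by blast
  qed
qed

lemma orbit_rcong_iff:
  assumes I: "brace_ideal I" and x: "x \<in> carrier A" and y: "y \<in> carrier A"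
  shows "(\<lambda>\<^sub>A x g, \<lambda>\<^sub>A y g) \<in> rcong\<^bsub>A\<^esub> I \<longleftrightarrow> (x, y) \<in> rcong\<^bsub>A\<^esub> (socle_over I)"
proof -
  have "(\<lambda>\<^sub>A x g, \<lambda>\<^sub>A y g) \<in> rcong\<^bsub>A\<^esub> I \<longleftrightarrow> \<lambda>\<^sub>A (x\<^sup>-) (-\<^sub>A \<lambda>\<^sub>A x g +\<^sub>A \<lambda>\<^sub>A y g) \<in> I"
    unfolding r_congruent_def using brace_ideal_lambda_iff[OF I] x y g_closed by simp
  also have "\<lambda>\<^sub>A (x\<^sup>-) (-\<^sub>A \<lambda>\<^sub>A x g +\<^sub>A \<lambda>\<^sub>A y g) = -\<^sub>A g +\<^sub>A \<lambda>\<^sub>A (x\<^sup>- \<circ>\<^sub>A y) g"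
    using x y g_closed by (simp add: lambda_add lambda_neg lambda_circ)
  also have "\<dots> \<in> I \<longleftrightarrow> x\<^sup>- \<circ>\<^sub>A y \<in> socle_over I"
    using socle_over_eq_stabiliser_mod[OF I] x y unfolding stabiliser_mod_def by simp
  also have "\<dots> \<longleftrightarrow> (x, y) \<in> rcong\<^bsub>A\<^esub> (socle_over I)"
    unfolding r_congruent_def using brace_ideal_neg_add_iff[OF brace_ideal_socle_over[OF I] x y] x y
    by simp
  finally show ?thesis .
qed

lemma ret_rel_unicon_op_Suc:
  assumes I: "brace_ideal I" and n: "ret_rel (carrier A) (unicon_op A C g) n = rcong\<^bsub>A\<^esub> I"
  shows "ret_rel (carrier A) (unicon_op A C g) (Suc n) = rcong\<^bsub>A\<^esub> (socle_over I)"
proof -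
  interpret I: normal I C using brace_ideal_normal_circ[OF I] .
  have "(x, y) \<in> ret_rel (carrier A) (unicon_op A C g) (Suc n) \<longleftrightarrow> (x, y) \<in> rcong\<^bsub>A\<^esub> (socle_over I)"
    if x: "x \<in> carrier A" and y: "y \<in> carrier A" for x y
  proof -
    define L M where "L = \<lambda>\<^sub>A x g" and "M = \<lambda>\<^sub>A y g"
    have L: "L \<in> carrier A" and M: "M \<in> carrier A" unfolding L_def M_def using x y g_closed by simp_all
    have "(x, y) \<in> ret_rel (carrier A) (unicon_op A C g) (Suc n) \<longleftrightarrow>
          (\<forall>z\<in>carrier A. (L\<^sup>- \<circ>\<^sub>A z, M\<^sup>- \<circ>\<^sub>A z) \<in> rcong\<^bsub>C\<^esub> I)"
      using x y by (simp add: n rcong_add_eq_rcong_circ[OF I] unicon_op_def L_def M_def)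
    also have "\<dots> \<longleftrightarrow> (L\<^sup>-, M\<^sup>-) \<in> rcong\<^bsub>C\<^esub> I"
      using I.rcong_mult_right_iff[of "L\<^sup>-" "M\<^sup>-"] L M C.r_one[of "L\<^sup>-"] C.r_one[of "M\<^sup>-"]
      by (auto simp del: C.r_one)
    also have "\<dots> \<longleftrightarrow> (M, L) \<in> rcong\<^bsub>C\<^esub> I"
      unfolding r_congruent_def using I.mult_mem_commute[of L "M\<^sup>-"] L M by simp
    also have "\<dots> \<longleftrightarrow> (y, x) \<in> rcong\<^bsub>A\<^esub> (socle_over I)"
      unfolding L_def M_def rcong_add_eq_rcong_circ[OF I, symmetric] using orbit_rcong_iff[OF I y x] .
    also have "\<dots> \<longleftrightarrow> (x, y) \<in> rcong\<^bsub>A\<^esub> (socle_over I)"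
      using subgroup.equiv_rcong[OF brace_ideal_subgroup_add[OF brace_ideal_socle_over[OF I]] A.is_group]
      unfolding equiv_def sym_def by blast
    finally show ?thesis .
  qed
  moreover have "ret_rel (carrier A) (unicon_op A C g) (Suc n) \<subseteq> carrier A \<times> carrier A"
    "rcong\<^bsub>A\<^esub> (socle_over I) \<subseteq> carrier A \<times> carrier A"
    unfolding r_congruent_def by auto
  ultimately show ?thesis by blast
qed

lemma ret_rel_unicon_op: "ret_rel (carrier A) (unicon_op A C g) n = rcong\<^bsub>A\<^esub> (socle_series n)"
proof (induction n)
  case 0
  show ?case by (simp add: rcong_zero)
next
  case (Suc n)
  show ?case
    using ret_rel_unicon_op_Suc[OF brace_ideal_socle_series Suc.IH] by (simp del: ret_rel.simps)
qed

lemma socle_over_fixed_imp_carrier: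
  assumes fin: "finite (carrier A)" and I: "brace_ideal I" and fixed: "socle_over I = I"
  shows "I = carrier A"
proof -
  interpret I: subgroup I A using brace_ideal_subgroup_add[OF I] .
  have "(\<lambda>x. \<lambda>\<^sub>A x g) ` carrier A \<subseteq> carrier A" using g_closed by auto
  moreover have "(\<lambda>\<^sub>A x g, \<lambda>\<^sub>A y g) \<in> rcong\<^bsub>A\<^esub> I \<longleftrightarrow> (x, y) \<in> rcong\<^bsub>A\<^esub> I"
    if "x \<in> carrier A" "y \<in> carrier A" for x y
    using orbit_rcong_iff[OF I that] fixed by simp
  ultimately have "\<exists>x\<in>carrier A. (\<lambda>\<^sub>A x g, \<zero>\<^sub>A) \<in> rcong\<^bsub>A\<^esub> I"
    using finite_equiv_self_embedding_surj[OF fin I.equiv_rcong[OF A.is_group]] by blast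
  then obtain x where x: "x \<in> carrier A" and "-\<^sub>A \<lambda>\<^sub>A x g \<in> I"
    unfolding r_congruent_def by auto
  then have "\<lambda>\<^sub>A x g \<in> I" using I.m_inv_closed g_closed by fastforce
  then have "g \<in> I" using brace_ideal_lambda_iff[OF I x g_closed] by simp
  then have "carrier A \<subseteq> I"
    using carrier_subset_subgroup_of_orbit[OF I.subgroup_axioms] brace_ideal_lambda_closed[OF I] by blast
  then show ?thesis using I.subset by blast
qed

lemma socle_series_eq_carrier_or_card_gt:
  assumes fin: "finite (carrier A)"
  shows "socle_series n = carrier A \<or> n < card (socle_series n)"
proof (induction n)
  case 0
  show ?case by simp
next
  case (Suc n)
  show ?case
  proof (cases "socle_series n = carrier A")
    case True
    then show ?thesis by (simp add: socle_over_carrier)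
  next
    case False
    then have "socle_series n \<subset> socle_series (Suc n)"
      using socle_over_fixed_imp_carrier[OF fin brace_ideal_socle_series]
        subset_socle_over[OF brace_ideal_socle_series] by auto
    moreover have "finite (socle_series (Suc n))"
      using finite_subset[OF socle_over_subset fin] by simp
    ultimately have "card (socle_series n) < card (socle_series (Suc n))"
      by (rule psubset_card_mono[rotated])
    then show ?thesis using Suc.IH False by simp
  qed
qed

lemma socle_series_card_eq_carrier:
  assumes fin: "finite (carrier A)"
  shows "socle_series (card (carrier A)) = carrier A"
  using socle_series_eq_carrier_or_card_gt[OF fin, of "card (carrier A)"]
    card_mono[OF fin brace_ideal_subset[OF brace_ideal_socle_series]] by (meson leD)

end

theorem mainTheorem6:
  fixes Gadd Gcirc :: "'a monoid" and B :: "'a set" and g :: 'a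
  assumes "left_brace Gadd Gcirc"
    and "finite (carrier Gadd)"
    and "dedekind_group Gcirc"
    and "transitive_cycle_base Gadd Gcirc B"
    and "g \<in> B"
  shows "has_finite_mpl (carrier Gadd) (decomp_op Gadd Gcirc)
       \<and> has_finite_mpl (carrier Gadd) (unicon_op Gadd Gcirc g)
       \<and> mpl (carrier Gadd) (decomp_op Gadd Gcirc) = mpl (carrier Gadd) (unicon_op Gadd Gcirc g)
       \<and> (\<forall>n. Ret_iter (carrier Gadd) (decomp_op Gadd Gcirc) n
              = Ret_iter (carrier Gadd) (unicon_op Gadd Gcirc g) n)"
proof -
  interpret brace Gadd Gcirc by unfold_locales (fact assms(1))
  interpret dedekind_brace_orbit Gadd Gcirc g
    using transitive_cycle_base_orbit_generates[OF assms(4,5)] assms(3) by unfold_locales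
  have same_rets: "Ret_iter (carrier Gadd) (decomp_op Gadd Gcirc) = Ret_iter (carrier Gadd) (unicon_op Gadd Gcirc g)"
    unfolding Ret_iter_def ret_rel_decomp_op ret_rel_unicon_op ..
  have "card (Ret_iter (carrier Gadd) (decomp_op Gadd Gcirc) (card (carrier Gadd))) = 1"
    unfolding Ret_iter_def ret_rel_decomp_op socle_series_card_eq_carrier[OF assms(2)]
    by (rule card_quotient_rcong_carrier)
  then show ?thesis
    unfolding has_finite_mpl_def mpl_def same_rets by blast
qed

end
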